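(* 1. There exists an infinite word whose letter frequencies all exist and are rational but which is not weak abelian periodic. 2. If an infinite word $w$ over a finite alphabet has a letter whose frequency in $w$ exists and is irrational, then $w$ is not weak abelian periodic. 3. If an infinite binary word $w$ does not have frequencies of letters, then $w$ is weak abelian periodic. 4. There exists an infinite ternary word which does not have frequencies of letters and which is not weak abelian periodic.
   Context: For a finite word $u$, $|u|_a$ is the number of occurrences of the letter $a$ in $u$, and $\rho_a(u)=|u|_a/|u|$ for nonempty $u$. For an infinite word $w$, the frequency of a letter $a$ in $w$ is $\rho_a(w)=\lim_{n\to\infty}\rho_a(\mathrm{pref}_n(w))$ when this limit exists, where $\mathrm{pref}_n(w)$ is the prefix of length $n$; $w$ "does not have frequencies of letters" if this limit fails to exist for some letter. An infinite word $w$ over a finite alphabet $\Sigma$ is weak abelian periodic if $w=v_0v_1v_2\cdots$ with $v_0$ finite and $v_1,v_2,\dots$ nonempty finite words such that $\rho_a(v_i)=\rho_a(v_j)$ for all $a\in\Sigma$ and all $i,j\ge1$. *)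

theory Defs
  imports Complex_Main
begin

definition rho :: "'a \<Rightarrow> 'a list \<Rightarrow> real" where
  "rho a u = real (count_list u a) / real (length u)"

definition pref :: "nat \<Rightarrow> (nat \<Rightarrow> 'a) \<Rightarrow> 'a list" where
  "pref n w = map w [0..<n]"

definition has_letter_frequencies :: "'a set \<Rightarrow> (nat \<Rightarrow> 'a) \<Rightarrow> bool" where
  "has_letter_frequencies \<Sigma> w = (\<forall>a\<in>\<Sigma>. convergent (\<lambda>n. rho a (pref n w)))"

text \<open>w = v_0 v_1 v_2 ... : every finite concatenation v_0 ... v_(n-1) is a prefix of w.
  Since v_i is nonempty for i >= 1, this determines w completely.\<close>
definition weak_abelian_periodic :: "'a set \<Rightarrow> (nat \<Rightarrow> 'a) \<Rightarrow> bool" where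
  "weak_abelian_periodic \<Sigma> w =
    (\<exists>v :: nat \<Rightarrow> 'a list.
       (\<forall>i\<ge>1. v i \<noteq> []) \<and>
       (\<forall>n. pref (length (concat (map v [0..<n]))) w = concat (map v [0..<n])) \<and>
       (\<forall>a\<in>\<Sigma>. \<forall>i\<ge>1. \<forall>j\<ge>1. rho a (v i) = rho a (v j)))"

end

theory Submission
  imports Defs "HOL-Library.Infinite_Set" "HOL-Library.Discrete_Functions"
begin

text \<open>
  If \<open>w = v\<^sub>0 v\<^sub>1 v\<^sub>2 \<dots>\<close> with blocks \<open>v\<^sub>i\<close> (\<open>i \<ge> 1\<close>) of equal letter frequencies, then along
  the block boundaries the prefix frequency of a letter tends to its frequency in the blocks, a
  rational number; so an existing frequency must be that number. This excludes irrational
  frequencies, and also a letter of frequency zero occurring infinitely often: it would be absent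
  from all blocks after the first. Both examples place such a letter exactly at the powers of two;
  in the ternary one the dyadic intervals between them are filled alternately with 0 and 1, so
  that the frequency of 0 oscillates.

  Conversely, if the frequency of \<open>a\<close> in a binary word oscillates, some rational \<open>p / m\<close> is
  crossed infinitely often in both directions. Then \<open>m |pref n w|\<^sub>a - p n\<close> changes sign
  infinitely often while dropping by at most \<open>p\<close> per step, so some value recurs infinitely often,
  and cutting \<open>w\<close> at those positions gives blocks of frequency exactly \<open>p / m\<close>.
\<close>

lemma length_pref [simp]: "length (pref n w) = n"
  by (simp add: pref_def)

lemma pref_0 [simp]: "pref 0 w = []"
  by (simp add: pref_def)

lemma pref_append: "m \<le> n \<Longrightarrow> pref n w = pref m w @ map w [m..<n]"
  by (metis le_add_diff_inverse map_append pref_def upt_add_eq_append zero_le)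

lemma count_list_pref: "count_list (pref n w) a = card {i. i < n \<and> w i = a}"
  unfolding count_list_eq_length_filter length_filter_conv_card pref_def
  by (auto intro: arg_cong[where f = card])

lemma count_list_pref_mono: "m \<le> n \<Longrightarrow> count_list (pref m w) a \<le> count_list (pref n w) a"
  by (simp add: pref_append)

lemma count_list_pref_unbounded:
  assumes "infinite {n. w n = a}"
  shows "\<exists>N. k < count_list (pref N w) a"
proof -
  obtain T where T: "finite T" "card T = Suc k" "T \<subseteq> {n. w n = a}"
    using infinite_arbitrarily_large[OF assms] by blast
  then have "T \<subseteq> {i. i < Suc (Max T) \<and> w i = a}"
    by (auto intro: le_imp_less_Suc Max_ge)
  then have "Suc k \<le> count_list (pref (Suc (Max T)) w) a"
    unfolding count_list_pref using T(2) by (metis card_mono finite_Collect_conjI finite_Collect_less_nat)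
  then show ?thesis by (metis Suc_le_eq)
qed

lemma rho_in_Rats: "rho a u \<in> \<rat>"
  unfolding rho_def by (intro Rats_divide Rats_of_nat)

lemma rho_nonneg: "0 \<le> rho a u"
  by (simp add: rho_def)

lemma rho_le_one: "rho a u \<le> 1"
  using count_le_length[of u a] by (cases "length u = 0") (auto simp: rho_def)

lemma rho_other_letter:
  assumes "set u \<subseteq> {a, b}" "a \<noteq> b" "u \<noteq> []"
  shows "rho b u = 1 - rho a u"
proof -
  have "count_list u a + count_list u b = length u"
    using sum_count_set[OF assms(1)] assms(2) by simp
  then have "real (count_list u b) = real (length u) - real (count_list u a)"
    by linarith
  then show ?thesis
    using assms(3) by (simp add: rho_def diff_divide_distrib)
qed

lemma length_concat_blocks_ge:
  assumes "\<forall>i\<ge>1. v i \<noteq> []"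
  shows "length (v 0) + n \<le> length (concat (map v [0..<Suc n]))"
proof (induction n)
  case (Suc n)
  have "length (v (Suc n)) > 0" using assms by simp
  then show ?case using Suc by (simp del: length_greater_0_conv)
qed simp

text \<open>Along the block boundaries the prefix frequency is an affine function of the inverse length
  whose constant term is the common block frequency.\<close>

lemma block_frequency_eq_limit:
  assumes nonempty: "\<forall>i\<ge>1. v i \<noteq> []"
    and blocks: "\<forall>n. pref (length (concat (map v [0..<n]))) w = concat (map v [0..<n])"
    and same: "\<forall>i\<ge>1. \<forall>j\<ge>1. rho a (v i) = rho a (v j)"
    and lim: "(\<lambda>n. rho a (pref n w)) \<longlonglongrightarrow> r"
  shows "rho a (v 1) = r"
proof -
  define q where "q = rho a (v 1)"
  define g where "g n = length (concat (map v [0..<Suc n]))" for n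
  define c0 where "c0 = real (count_list (v 0) a) - q * real (length (v 0))"
  have block_count: "real (count_list (v i) a) = q * real (length (v i))" if "i \<ge> 1" for i
  proof -
    have "rho a (v i) = q" using same[rule_format, OF that, of 1] by (simp add: q_def)
    then show ?thesis using nonempty that by (simp add: rho_def field_simps)
  qed
  have count_blocks: "real (count_list (concat (map v [0..<Suc n])) a)
      = c0 + q * real (length (concat (map v [0..<Suc n])))" for n
  proof (induction n)
    case (Suc n)
    then show ?case using block_count[of "Suc n"] by (simp add: algebra_simps)
  qed (simp add: c0_def)
  have count_g: "real (count_list (pref (g n) w) a) = c0 + q * real (g n)" for n
    using count_blocks[of n] blocks[rule_format, of "Suc n"] unfolding g_def by (simp only:)
  have "strict_mono g"
    unfolding strict_mono_Suc_iff using nonempty by (simp add: g_def)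
  then have g_inf: "filterlim (\<lambda>n. real (g n)) at_infinity sequentially"
    by (intro filterlim_at_top_imp_at_infinity filterlim_compose[OF filterlim_real_sequentially]
        filterlim_subseq)
  have "(\<lambda>n. q + c0 / real (g n)) \<longlonglongrightarrow> q"
    using tendsto_add[OF tendsto_const tendsto_divide_0[OF tendsto_const g_inf]] by simp
  moreover have "\<forall>\<^sub>F n in sequentially. q + c0 / real (g n) = rho a (pref (g n) w)"
    unfolding eventually_sequentially
  proof (intro exI allI impI)
    fix n :: nat assume "n \<ge> 1"
    then have "real (g n) > 0"
      using length_concat_blocks_ge[OF nonempty, of n] by (simp add: g_def)
    then show "q + c0 / real (g n) = rho a (pref (g n) w)"
      by (simp add: rho_def count_g field_simps)
  qed
  ultimately have "(\<lambda>n. rho a (pref (g n) w)) \<longlonglongrightarrow> q"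
    by (rule Lim_transform_eventually)
  moreover have "(\<lambda>n. rho a (pref (g n) w)) \<longlonglongrightarrow> r"
    using LIMSEQ_subseq_LIMSEQ[OF lim \<open>strict_mono g\<close>] by (simp add: o_def)
  ultimately show ?thesis unfolding q_def by (rule LIMSEQ_unique)
qed

lemma weak_abelian_periodic_frequency:
  assumes "weak_abelian_periodic \<Sigma> w" "a \<in> \<Sigma>" "(\<lambda>n. rho a (pref n w)) \<longlonglongrightarrow> r"
  obtains v where "\<forall>i\<ge>1. v i \<noteq> []"
    and "\<forall>n. pref (length (concat (map v [0..<n]))) w = concat (map v [0..<n])"
    and "\<And>i. i \<ge> 1 \<Longrightarrow> rho a (v i) = r"
proof -
  from assms(1) obtain v where nonempty: "\<forall>i\<ge>1. v i \<noteq> []"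
    and blocks: "\<forall>n. pref (length (concat (map v [0..<n]))) w = concat (map v [0..<n])"
    and same: "\<forall>c\<in>\<Sigma>. \<forall>i\<ge>1. \<forall>j\<ge>1. rho c (v i) = rho c (v j)"
    unfolding weak_abelian_periodic_def by (elim exE conjE)
  have same_a: "\<forall>i\<ge>1. \<forall>j\<ge>1. rho a (v i) = rho a (v j)"
    using same assms(2) by blast
  then have "rho a (v 1) = r"
    by (rule block_frequency_eq_limit[OF nonempty blocks _ assms(3)])
  then show thesis
    using that[OF nonempty blocks] same_a by (metis order_refl)
qed

lemma irrational_frequency_not_weak_abelian_periodic:
  assumes "a \<in> \<Sigma>" "(\<lambda>n. rho a (pref n w)) \<longlonglongrightarrow> r" "r \<notin> \<rat>"
  shows "\<not> weak_abelian_periodic \<Sigma> w"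
proof
  assume "weak_abelian_periodic \<Sigma> w"
  then obtain v :: "nat \<Rightarrow> 'a list" where "\<And>i. i \<ge> 1 \<Longrightarrow> rho a (v i) = r"
    by (rule weak_abelian_periodic_frequency[OF _ assms(1,2)]) blast
  then have "r = rho a (v 1)"
    by simp
  then show False
    using assms(3) rho_in_Rats[of a "v 1"] by simp
qed

lemma zero_frequency_not_weak_abelian_periodic:
  assumes "a \<in> \<Sigma>" "(\<lambda>n. rho a (pref n w)) \<longlonglongrightarrow> 0" "infinite {n. w n = a}"
  shows "\<not> weak_abelian_periodic \<Sigma> w"
proof
  assume "weak_abelian_periodic \<Sigma> w"
  then obtain v where nonempty: "\<forall>i\<ge>1. v i \<noteq> []"
    and blocks: "\<forall>n. pref (length (concat (map v [0..<n]))) w = concat (map v [0..<n])"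
    and zero: "\<And>i. i \<ge> 1 \<Longrightarrow> rho a (v i) = 0"
    by (rule weak_abelian_periodic_frequency[OF _ assms(1,2)]) blast
  have absent: "count_list (v i) a = 0" if "i \<ge> 1" for i
    using zero[OF that] nonempty that by (simp add: rho_def)
  have count_blocks: "count_list (concat (map v [0..<Suc n])) a = count_list (v 0) a" for n
    by (induction n) (simp_all add: absent)
  obtain N where N: "count_list (v 0) a < count_list (pref N w) a"
    using count_list_pref_unbounded[OF assms(3)] by blast
  have "N \<le> length (concat (map v [0..<Suc N]))"
    using length_concat_blocks_ge[OF nonempty, of N] by simp
  then have "count_list (pref N w) a
      \<le> count_list (pref (length (concat (map v [0..<Suc N]))) w) a"
    by (rule count_list_pref_mono)
  also have "\<dots> = count_list (v 0) a"
    by (simp only: blocks[rule_format] count_blocks)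
  finally show False
    using N by simp
qed

lemma square_le_two_pow: "n * n \<le> 2 * 2 ^ n"
proof -
  have odd_le: "2 * n + 1 \<le> 2 * 2 ^ n" for n :: nat
  proof (induction n)
    case (Suc n)
    moreover have "1 \<le> (2::nat) ^ n" "2 * 2 ^ Suc n = 4 * (2::nat) ^ n"
      "2 * Suc n + 1 = (2 * n + 1) + 2"
      by simp_all
    ultimately show ?case by linarith
  qed simp
  show ?thesis
  proof (induction n)
    case (Suc n)
    have "Suc n * Suc n = n * n + (2 * n + 1)" "2 * 2 ^ Suc n = 2 * 2 ^ n + 2 * (2::nat) ^ n"
      by simp_all
    then show ?case using Suc.IH odd_le[of n] by linarith
  qed simp
qed

locale letter_at_powers_of_two =
  fixes w :: "nat \<Rightarrow> 'a" and a :: 'a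
  assumes letter_iff: "w n = a \<longleftrightarrow> (\<exists>j. n = 2 ^ j)"
begin

lemma count_list_pref_le: "n \<le> 2 ^ k \<Longrightarrow> count_list (pref n w) a \<le> k"
proof -
  assume "n \<le> 2 ^ k"
  have "{i. i < n \<and> w i = a} \<subseteq> (\<lambda>j. 2 ^ j) ` {..<k}"
  proof
    fix i assume "i \<in> {i. i < n \<and> w i = a}"
    then obtain j where "i = 2 ^ j" "(2::nat) ^ j < 2 ^ k"
      using letter_iff \<open>n \<le> 2 ^ k\<close> by fastforce
    then show "i \<in> (\<lambda>j. 2 ^ j) ` {..<k}"
      by (simp add: power_strict_increasing_iff)
  qed
  then have "card {i. i < n \<and> w i = a} \<le> card ((\<lambda>j. 2 ^ j :: nat) ` {..<k})"
    by (intro card_mono) auto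
  also have "\<dots> \<le> k"
    using card_image_le[of "{..<k}"] by simp
  finally show ?thesis
    unfolding count_list_pref .
qed

lemma count_list_pref_square_le: "count_list (pref n w) a * count_list (pref n w) a \<le> 4 * n"
proof (cases "count_list (pref n w) a")
  case (Suc k)
  then have "2 ^ k < n"
    using count_list_pref_le[of n k] by linarith
  with Suc show ?thesis
    using square_le_two_pow[of "Suc k"] by simp
qed simp

lemma frequency_tendsto_zero: "(\<lambda>n. rho a (pref n w)) \<longlonglongrightarrow> 0"
proof (rule tendsto_sandwich)
  show "\<forall>\<^sub>F n in sequentially. 0 \<le> rho a (pref n w)"
    by (simp add: rho_nonneg)
  show "\<forall>\<^sub>F n in sequentially. rho a (pref n w) \<le> 2 / sqrt (real n)"
    unfolding eventually_sequentially
  proof (intro exI allI impI)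
    fix n :: nat assume "n \<ge> 1"
    define c where "c = real (count_list (pref n w) a)"
    have "c\<^sup>2 \<le> (2 * sqrt (real n))\<^sup>2"
      using count_list_pref_square_le[of n] by (simp add: c_def power2_eq_square flip: of_nat_mult)
    then have "c \<le> 2 * sqrt (real n)"
      by (rule power2_le_imp_le) simp
    then have "c * sqrt (real n) \<le> 2 * real n"
      using mult_right_mono[of c "2 * sqrt (real n)" "sqrt (real n)"] by (simp add: mult.assoc)
    then show "rho a (pref n w) \<le> 2 / sqrt (real n)"
      using \<open>n \<ge> 1\<close> by (simp add: rho_def c_def[symmetric] field_simps)
  qed
  have "(\<lambda>n. 2 * sqrt (inverse (real n))) \<longlonglongrightarrow> 2 * sqrt 0"
    by (intro tendsto_mult tendsto_const tendsto_real_sqrt lim_inverse_n)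
  then show "(\<lambda>n. 2 / sqrt (real n)) \<longlonglongrightarrow> 0"
    by (simp add: real_sqrt_inverse divide_inverse)
qed simp

lemma infinitely_many_occurrences: "infinite {n. w n = a}"
proof -
  have "{n. w n = a} = range (\<lambda>j. 2 ^ j :: nat)"
    using letter_iff by auto
  moreover have "inj (\<lambda>j. 2 ^ j :: nat)"
    by (simp add: inj_on_def)
  ultimately show ?thesis
    by (simp add: range_inj_infinite)
qed

lemma not_weak_abelian_periodic: "a \<in> \<Sigma> \<Longrightarrow> \<not> weak_abelian_periodic \<Sigma> w"
  by (rule zero_frequency_not_weak_abelian_periodic[OF _ frequency_tendsto_zero
        infinitely_many_occurrences])

end

definition sparse_word :: "nat \<Rightarrow> nat" where
  "sparse_word n = (if n = 2 ^ floor_log n then 1 else 0)"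

interpretation sparse_word: letter_at_powers_of_two sparse_word 1
proof
  fix n
  show "sparse_word n = 1 \<longleftrightarrow> (\<exists>j. n = 2 ^ j)"
    by (auto simp: sparse_word_def)
qed

lemma sparse_word_zero_frequency_tendsto_one: "(\<lambda>n. rho 0 (pref n sparse_word)) \<longlonglongrightarrow> 1"
proof -
  have "(\<lambda>n. 1 - rho 1 (pref n sparse_word)) \<longlonglongrightarrow> 1 - 0"
    by (intro tendsto_diff tendsto_const sparse_word.frequency_tendsto_zero)
  moreover have "\<forall>\<^sub>F n in sequentially. 1 - rho 1 (pref n sparse_word) = rho 0 (pref n sparse_word)"
    unfolding eventually_sequentially
    by (intro exI[of _ 1] allI impI rho_other_letter[symmetric]) (auto simp: pref_def sparse_word_def)
  ultimately show ?thesis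
    by (simp add: Lim_transform_eventually)
qed

text \<open>If no rational threshold is crossed infinitely often in both directions, then the sequence
  converges to the supremum of its eventual lower bounds.\<close>

lemma not_convergent_rational_crossing:
  fixes x :: "nat \<Rightarrow> real"
  assumes "Bseq x" "\<not> convergent x"
  obtains q where "q \<in> \<rat>" "\<forall>N. \<exists>n\<ge>N. q < x n" "\<forall>N. \<exists>n\<ge>N. x n < q"
proof (rule ccontr)
  note crossing = that
  assume no_crossing: "\<not> thesis"
  have eventually_one_side: "(\<exists>N. \<forall>n\<ge>N. x n \<le> q) \<or> (\<exists>N. \<forall>n\<ge>N. q \<le> x n)"
    if "q \<in> \<rat>" for q
    using crossing[of q] no_crossing that by (meson not_le)
  obtain B where B: "\<And>n. \<bar>x n\<bar> \<le> B"
    using assms(1) by (auto simp: Bseq_def)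
  define A where "A = {y. \<exists>N. \<forall>n\<ge>N. y \<le> x n}"
  have "- B \<in> A"
    using B unfolding A_def abs_le_iff by (simp add: minus_le_iff)
  have "bdd_above A"
  proof
    fix y assume "y \<in> A"
    then obtain N where "\<forall>n\<ge>N. y \<le> x n" by (auto simp: A_def)
    then show "y \<le> B" using B[of N] by (auto simp: abs_le_iff)
  qed
  have "x \<longlonglongrightarrow> Sup A"
  proof (rule LIMSEQ_I)
    fix r :: real assume "0 < r"
    obtain q where q: "q \<in> \<rat>" "Sup A < q" "q < Sup A + r"
      using Rats_dense_in_real[of "Sup A" "Sup A + r"] \<open>0 < r\<close> by auto
    have "q \<notin> A"
      using cSup_upper[OF _ \<open>bdd_above A\<close>] q(2) by force
    then obtain N1 where N1: "\<forall>n\<ge>N1. x n \<le> q"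
      using eventually_one_side[OF q(1)] by (auto simp: A_def)
    obtain y where y: "y \<in> A" "Sup A - r < y"
      using less_cSupD[of A "Sup A - r"] \<open>- B \<in> A\<close> \<open>0 < r\<close> by auto
    then obtain N2 where N2: "\<forall>n\<ge>N2. y \<le> x n" by (auto simp: A_def)
    have "norm (x n - Sup A) < r" if "n \<ge> max N1 N2" for n
    proof -
      have "x n \<le> q" "y \<le> x n" using N1 N2 that by auto
      then show ?thesis using q(3) y(2) by (simp add: abs_less_iff)
    qed
    then show "\<exists>N. \<forall>n\<ge>N. norm (x n - Sup A) < r" by blast
  qed
  with assms(2) show False
    using convergentI by blast
qed

lemma int_seq_crosses_down:
  fixes f :: "nat \<Rightarrow> int"
  assumes "0 < f m" "f n \<le> 0" "m \<le> n"
  obtains k where "m \<le> k" "0 < f k" "f (Suc k) \<le> 0"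
  using assms
proof (induction n arbitrary: thesis)
  case (Suc n)
  show ?case
  proof (cases "m \<le> n \<and> 0 < f n")
    case True
    then show ?thesis using Suc.prems by blast
  next
    case False
    with Suc.prems show ?thesis
      by (metis Suc.IH le_Suc_eq not_le)
  qed
qed simp

text \<open>A sequence that goes down by at most \<open>p\<close> per step and changes sign infinitely often
  lands infinitely often in the window \<open>(-p, 0]\<close>, so by pigeonhole some value there recurs.\<close>

lemma infinite_level_set_if_oscillating:
  fixes f :: "nat \<Rightarrow> int"
  assumes steps: "\<And>n. f n - p \<le> f (Suc n)"
    and pos: "\<forall>N. \<exists>n\<ge>N. 0 < f n" and nonpos: "\<forall>N. \<exists>n\<ge>N. f n \<le> 0"
  obtains c where "infinite {n. f n = c}"
proof -
  define W where "W = {n. - p < f n \<and> f n \<le> 0}"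
  have "infinite W"
    unfolding infinite_nat_iff_unbounded_le
  proof
    fix N
    obtain m where m: "N \<le> m" "0 < f m" using pos by blast
    obtain n where n: "m \<le> n" "f n \<le> 0" using nonpos by blast
    obtain k where "m \<le> k" "0 < f k" "f (Suc k) \<le> 0"
      using int_seq_crosses_down m(2) n by metis
    then show "\<exists>n\<ge>N. n \<in> W"
      using steps[of k] m(1) by (intro exI[of _ "Suc k"]) (auto simp: W_def)
  qed
  moreover have "finite (f ` W)"
    by (rule finite_subset[of _ "{-p<..0}"]) (auto simp: W_def)
  ultimately obtain n0 where "infinite {n \<in> W. f n = f n0}"
    using pigeonhole_infinite by blast
  then have "infinite {n. f n = f n0}"
    by (rule infinite_super[rotated]) auto
  then show thesis by (rule that)
qed

lemma weak_abelian_periodicI_cuts: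
  assumes "strict_mono e"
    and "\<And>c i j. c \<in> \<Sigma> \<Longrightarrow> rho c (map w [e i..<e (Suc i)]) = rho c (map w [e j..<e (Suc j)])"
  shows "weak_abelian_periodic \<Sigma> w"
proof -
  define v where "v i = (if i = 0 then pref (e 0) w else map w [e (i - 1)..<e i])" for i
  have e_less: "e i < e (Suc i)" for i
    using assms(1) by (simp add: strict_mono_Suc_iff)
  have concat_v: "concat (map v [0..<Suc n]) = pref (e n) w" for n
  proof (induction n)
    case (Suc n)
    then show ?case
      using pref_append[of "e n" "e (Suc n)" w] e_less[of n] by (simp add: v_def)
  qed (simp add: v_def)
  have v_Suc: "v (Suc i) = map w [e i..<e (Suc i)]" for i
    by (simp add: v_def)
  have "\<forall>i\<ge>1. v i \<noteq> []"
  proof (intro allI impI)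
    fix i :: nat assume "1 \<le> i"
    then obtain k where "i = Suc k" by (cases i) auto
    then show "v i \<noteq> []" using e_less[of k] by (simp add: v_Suc)
  qed
  moreover have "\<forall>n. pref (length (concat (map v [0..<n]))) w = concat (map v [0..<n])"
  proof
    fix n show "pref (length (concat (map v [0..<n]))) w = concat (map v [0..<n])"
      by (cases n) (simp_all add: concat_v pref_def del: upt_Suc)
  qed
  moreover have "\<forall>c\<in>\<Sigma>. \<forall>i\<ge>1. \<forall>j\<ge>1. rho c (v i) = rho c (v j)"
  proof (intro ballI allI impI)
    fix c and i j :: nat assume "c \<in> \<Sigma>" "1 \<le> i" "1 \<le> j"
    moreover obtain k l where "i = Suc k" "j = Suc l"
      using \<open>1 \<le> i\<close> \<open>1 \<le> j\<close> by (metis One_nat_def Suc_le_D)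
    ultimately show "rho c (v i) = rho c (v j)"
      using assms(2) by (simp add: v_Suc)
  qed
  ultimately show ?thesis
    unfolding weak_abelian_periodic_def by blast
qed

lemma rho_factor_eq:
  fixes p m :: int
  assumes "s < t" "0 < m"
    and "m * count_list (pref s w) a - p * s = m * count_list (pref t w) a - p * t"
  shows "rho a (map w [s..<t]) = of_int p / of_int m"
proof -
  have "count_list (pref t w) a = count_list (pref s w) a + count_list (map w [s..<t]) a"
    using pref_append[of s t w] assms(1) by simp
  with assms(3) have "m * count_list (map w [s..<t]) a = p * (t - s)"
    using assms(1) by (simp add: algebra_simps of_nat_diff)
  then have "of_int m * real (count_list (map w [s..<t]) a) = of_int p * real (t - s)"
    by (metis of_int_mult of_int_of_nat_eq)
  then show ?thesis
    using assms by (simp add: rho_def field_simps)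
qed

theorem binary_weak_abelian_periodic_if_not_convergent:
  assumes "a \<noteq> b" "range w \<subseteq> {a, b}" "\<not> convergent (\<lambda>n. rho a (pref n w))"
  shows "weak_abelian_periodic {a, b} w"
proof -
  define x where "x n = rho a (pref n w)" for n
  have "Bseq x"
    by (intro BseqI'[of _ 1]) (simp add: x_def abs_of_nonneg rho_nonneg rho_le_one)
  moreover have "\<not> convergent x"
    using assms(3) by (simp add: x_def[abs_def])
  ultimately obtain q where "q \<in> \<rat>" and above: "\<forall>N. \<exists>n\<ge>N. q < x n"
    and below: "\<forall>N. \<exists>n\<ge>N. x n < q"
    by (rule not_convergent_rational_crossing)
  from \<open>q \<in> \<rat>\<close> obtain p m :: int where "0 < m" and q: "q = of_int p / of_int m"
    by (rule Rats_cases') blast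
  define f where "f n = m * count_list (pref n w) a - p * n" for n
  have f_eq: "of_int (f n) = of_int m * real n * (x n - q)" for n
    using \<open>0 < m\<close> by (cases "n = 0") (simp_all add: f_def x_def rho_def q field_simps)
  have "f n - p \<le> f (Suc n)" for n
    using count_list_pref_mono[of n "Suc n" w a] \<open>0 < m\<close> by (simp add: f_def algebra_simps)
  moreover have "\<forall>N. \<exists>n\<ge>N. 0 < f n"
  proof
    fix N
    obtain n where "Suc N \<le> n" "q < x n" using above by blast
    then have "0 < of_int m * real n * (x n - q)"
      using \<open>0 < m\<close> by simp
    then show "\<exists>n\<ge>N. 0 < f n"
      using f_eq[of n] \<open>Suc N \<le> n\<close> by (intro exI[of _ n]) simp_all
  qed
  moreover have "\<forall>N. \<exists>n\<ge>N. f n \<le> 0"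
  proof
    fix N
    obtain n where "N \<le> n" "x n < q" using below by blast
    then have "of_int m * real n * (x n - q) \<le> 0"
      using \<open>0 < m\<close> by (intro mult_nonneg_nonpos) simp_all
    then show "\<exists>n\<ge>N. f n \<le> 0"
      using f_eq[of n] \<open>N \<le> n\<close> by (intro exI[of _ n]) simp_all
  qed
  ultimately obtain c where "infinite {n. f n = c}"
    by (rule infinite_level_set_if_oscillating)
  from infinite_enumerate[OF this] obtain e :: "nat \<Rightarrow> nat"
    where "strict_mono e" and level: "\<forall>i. e i \<in> {n. f n = c}"
    by blast
  have e_less: "e i < e (Suc i)" for i
    using \<open>strict_mono e\<close> by (simp add: strict_mono_Suc_iff)
  have rho_a: "rho a (map w [e i..<e (Suc i)]) = q" for i
    using rho_factor_eq[OF e_less \<open>0 < m\<close>, of i w a p] level by (simp add: f_def q)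
  have rho_b: "rho b (map w [e i..<e (Suc i)]) = 1 - q" for i
    using rho_other_letter[of "map w [e i..<e (Suc i)]" a b] assms(1,2) e_less[of i] rho_a[of i]
    by auto
  show ?thesis
    by (rule weak_abelian_periodicI_cuts[OF \<open>strict_mono e\<close>]) (auto simp: rho_a rho_b)
qed

lemma card_2_otherE:
  assumes "card A = 2" "a \<in> A"
  obtains b where "A = {a, b}" "a \<noteq> b"
proof -
  from assms(1) obtain x y where "A = {x, y}" "x \<noteq> y"
    by (auto simp: card_2_iff)
  with assms(2) that show thesis
    by (auto simp: insert_commute)
qed

theorem weak_abelian_periodic_if_no_letter_frequencies:
  assumes "card \<Sigma> = 2" "range w \<subseteq> \<Sigma>" "\<not> has_letter_frequencies \<Sigma> w"
  shows "weak_abelian_periodic \<Sigma> w"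
proof -
  obtain a where "a \<in> \<Sigma>" "\<not> convergent (\<lambda>n. rho a (pref n w))"
    using assms(3) unfolding has_letter_frequencies_def by blast
  moreover obtain b where "\<Sigma> = {a, b}" "a \<noteq> b"
    using card_2_otherE[OF assms(1) \<open>a \<in> \<Sigma>\<close>] by blast
  ultimately show ?thesis
    using assms(2) binary_weak_abelian_periodic_if_not_convergent[of a b w] by simp
qed

definition ternary_word :: "nat \<Rightarrow> nat" where
  "ternary_word n =
    (if n = 2 ^ floor_log n then 2 else if even (floor_log n) then 0 else 1)"

interpretation ternary_word: letter_at_powers_of_two ternary_word 2
proof
  fix n
  show "ternary_word n = 2 \<longleftrightarrow> (\<exists>j. n = 2 ^ j)"
    by (auto simp: ternary_word_def)
qed

lemma ternary_word_block:
  "map ternary_word [2 ^ j..<2 * 2 ^ j] = 2 # replicate (2 ^ j - 1) (if even j then 0 else 1)"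
proof (rule nth_equalityI)
  fix i assume "i < length (map ternary_word [2 ^ j..<2 * 2 ^ j])"
  then have i: "i < 2 ^ j" by simp
  show "map ternary_word [2 ^ j..<2 * 2 ^ j] ! i
      = (2 # replicate (2 ^ j - 1) (if even j then 0 else 1)) ! i"
  proof (cases i)
    case 0
    then show ?thesis by (simp add: ternary_word_def)
  next
    case (Suc k)
    have "floor_log (2 ^ j + i) = j"
      using i by (intro floor_log_eqI) auto
    moreover have "2 ^ j + i \<noteq> 2 ^ j"
      using Suc by simp
    ultimately show ?thesis
      using i Suc by (simp add: ternary_word_def nth_append)
  qed
qed simp

lemma count_zero_pref_double:
  "count_list (pref (2 * 2 ^ j) ternary_word) 0
    = count_list (pref (2 ^ j) ternary_word) 0 + (if even j then 2 ^ j - 1 else 0)"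
  using pref_append[of "2 ^ j" "2 * 2 ^ j" ternary_word] ternary_word_block[of j]
  by (simp add: count_list_eq_length_filter)

text \<open>Along \<open>n = 2\<^sup>j\<close> the frequency of 0 halves from each odd \<open>j\<close> to the next, yet stays
  at least \<open>1/4\<close> at every odd \<open>j \<ge> 3\<close>; no limit is compatible with both.\<close>

lemma ternary_word_frequency_not_convergent:
  "\<not> convergent (\<lambda>n. rho 0 (pref n ternary_word))"
proof
  assume "convergent (\<lambda>n. rho 0 (pref n ternary_word))"
  then obtain L where L: "(\<lambda>n. rho 0 (pref n ternary_word)) \<longlonglongrightarrow> L"
    by (auto simp: convergent_def)
  define y where "y j = rho 0 (pref (2 ^ j) ternary_word)" for j
  define c where "c j = real (count_list (pref (2 ^ j) ternary_word) 0)" for j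
  have y_c: "y j = c j / 2 ^ j" for j
    by (simp add: y_def c_def rho_def)
  have "strict_mono (\<lambda>k. 2 ^ Suc (2 * k) :: nat)" "strict_mono (\<lambda>k. 2 ^ Suc (Suc (2 * k)) :: nat)"
    by (simp_all add: strict_mono_Suc_iff)
  then have odd_lim: "(\<lambda>k. y (Suc (2 * k))) \<longlonglongrightarrow> L"
    and even_lim: "(\<lambda>k. y (Suc (Suc (2 * k)))) \<longlonglongrightarrow> L"
    using LIMSEQ_subseq_LIMSEQ[OF L] by (simp_all add: y_def o_def)
  have "c (Suc (Suc (2 * k))) = c (Suc (2 * k))" for k
    using count_zero_pref_double[of "Suc (2 * k)"] by (simp add: c_def)
  then have halve: "2 * y (Suc (Suc (2 * k))) = y (Suc (2 * k))" for k
    by (simp add: y_c)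
  have "(\<lambda>k. 2 * y (Suc (Suc (2 * k)))) \<longlonglongrightarrow> 2 * L"
    by (intro tendsto_mult tendsto_const even_lim)
  then have "(\<lambda>k. y (Suc (2 * k))) \<longlonglongrightarrow> 2 * L"
    by (simp only: halve)
  with odd_lim have "L = 2 * L"
    by (rule LIMSEQ_unique)
  then have "L = 0"
    by simp
  have "1 / 4 \<le> y (Suc (2 * k))" if "1 \<le> k" for k
  proof -
    have "real (2 ^ (2 * k) - 1) \<le> c (Suc (2 * k))"
      using count_zero_pref_double[of "2 * k"] unfolding c_def by (intro of_nat_mono) simp
    moreover have "(2::real) ^ 1 \<le> 2 ^ (2 * k)"
      using that by (intro power_increasing) simp_all
    ultimately show ?thesis
      by (simp add: y_c of_nat_diff field_simps)
  qed
  then have "1 / 4 \<le> L"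
    by (intro LIMSEQ_le_const[OF odd_lim]) auto
  with \<open>L = 0\<close> show False by simp
qed

theorem proposition3:
  shows
   "(\<exists>(\<Sigma>::nat set) (w::nat \<Rightarrow> nat). finite \<Sigma> \<and> range w \<subseteq> \<Sigma> \<and>
        (\<forall>a\<in>\<Sigma>. \<exists>r\<in>\<rat>. (\<lambda>n. rho a (pref n w)) \<longlonglongrightarrow> r) \<and>
        \<not> weak_abelian_periodic \<Sigma> w)
    \<and>
    (\<forall>(\<Sigma>::'a set) (w::nat \<Rightarrow> 'a) a r. finite \<Sigma> \<and> range w \<subseteq> \<Sigma> \<and> a \<in> \<Sigma> \<and>
        (\<lambda>n. rho a (pref n w)) \<longlonglongrightarrow> r \<and> r \<notin> \<rat> \<longrightarrow>
        \<not> weak_abelian_periodic \<Sigma> w)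
    \<and>
    (\<forall>(\<Sigma>::'b set) (w::nat \<Rightarrow> 'b). card \<Sigma> = 2 \<and> range w \<subseteq> \<Sigma> \<and>
        \<not> has_letter_frequencies \<Sigma> w \<longrightarrow> weak_abelian_periodic \<Sigma> w)
    \<and>
    (\<exists>(\<Sigma>::nat set) (w::nat \<Rightarrow> nat). card \<Sigma> = 3 \<and> range w \<subseteq> \<Sigma> \<and>
        \<not> has_letter_frequencies \<Sigma> w \<and> \<not> weak_abelian_periodic \<Sigma> w)"
proof (intro conjI allI impI)
  show "\<exists>(\<Sigma>::nat set) w. finite \<Sigma> \<and> range w \<subseteq> \<Sigma> \<and>
      (\<forall>a\<in>\<Sigma>. \<exists>r\<in>\<rat>. (\<lambda>n. rho a (pref n w)) \<longlonglongrightarrow> r) \<and> \<not> weak_abelian_periodic \<Sigma> w"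
    using sparse_word_zero_frequency_tendsto_one sparse_word.frequency_tendsto_zero
      sparse_word.not_weak_abelian_periodic[of "{0, 1}"]
    by (intro exI[of _ "{0, 1}"] exI[of _ sparse_word]) (auto simp: sparse_word_def)
  show "\<not> weak_abelian_periodic \<Sigma> w"
    if "finite \<Sigma> \<and> range w \<subseteq> \<Sigma> \<and> a \<in> \<Sigma> \<and> (\<lambda>n. rho a (pref n w)) \<longlonglongrightarrow> r \<and> r \<notin> \<rat>"
    for \<Sigma> :: "'a set" and w a r
    using that irrational_frequency_not_weak_abelian_periodic[of a \<Sigma> w r] by simp
  show "weak_abelian_periodic \<Sigma> w"
    if "card \<Sigma> = 2 \<and> range w \<subseteq> \<Sigma> \<and> \<not> has_letter_frequencies \<Sigma> w"
    for \<Sigma> :: "'b set" and w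
    using that weak_abelian_periodic_if_no_letter_frequencies by blast
  show "\<exists>(\<Sigma>::nat set) w. card \<Sigma> = 3 \<and> range w \<subseteq> \<Sigma> \<and>
      \<not> has_letter_frequencies \<Sigma> w \<and> \<not> weak_abelian_periodic \<Sigma> w"
    using ternary_word_frequency_not_convergent ternary_word.not_weak_abelian_periodic[of "{0, 1, 2}"]
    by (intro exI[of _ "{0, 1, 2}"] exI[of _ ternary_word])
      (auto simp: ternary_word_def has_letter_frequencies_def)
qed

end
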